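(* Let $n>p=p_n$ and $r_n=(-\log(1-\frac pn))^{1/2}$. Assume $p/n\to y\in(0,1]$ and that the real sequences $s=s_n$, $t=t_n$ satisfy $s=O(1/r_n)$, $t=O(1/r_n)$ as $n\to\infty$. Then $$\log\frac{\Gamma_p(\frac n2+t)}{\Gamma_p(\frac n2+s)}=p(t-s)(\log n-1-\log2)+r_n^2\Big[(t^2-s^2)-\Big(p-n+\frac12\Big)(t-s)\Big]+o(1)$$ as $n\to\infty$.
   Context: $\Gamma$ is the Gamma function and, for complex $z$ with $\operatorname{Re}(z)>\frac12(p-1)$, the multivariate Gamma function is $\Gamma_p(z)=\pi^{p(p-1)/4}\prod_{i=1}^p\Gamma\big(z-\frac12(i-1)\big)$. *)

theory Defs
  imports "HOL-Analysis.Analysis" "HOL-Library.Landau_Symbols"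
begin

definition mvGamma :: "nat \<Rightarrow> real \<Rightarrow> real" where
  "mvGamma p z = pi powr (real p * (real p - 1) / 4) *
     (\<Prod>i\<in>{1..p}. Gamma (z - (real i - 1) / 2))"

definition rseq :: "(nat \<Rightarrow> nat) \<Rightarrow> nat \<Rightarrow> real" where
  "rseq p n = sqrt (- ln (1 - real (p n) / real n))"

end

theory Submission
  imports Defs "HOL-Real_Asymp.Real_Asymp"
begin

text \<open>
  Put \<open>m = n - p\<close>. Up to the factor \<open>\<pi>\<^bsup>p(p-1)/4\<^esup>\<close>, \<open>\<Gamma>\<^sub>p(n/2 + u)\<close> is the product of
  \<open>\<Gamma>(j/2 + u)\<close> over \<open>m < j \<le> n\<close>, so the log-ratio is a sum of differences
  \<open>ln \<Gamma>(j/2 + t) - ln \<Gamma>(j/2 + s)\<close>. A second-order Taylor expansion of \<open>ln \<Gamma>\<close> at \<open>j/2\<close>,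
  whose remainder is \<open>O(|u|\<^sup>3/j\<^sup>2)\<close>, reduces everything to the sums of \<open>\<psi>(j/2)\<close> and \<open>\<psi>'(j/2)\<close>.
  Comparing \<open>\<psi>(x)\<close> with \<open>ln x - 1/(2x)\<close> and \<open>\<psi>'(x)\<close> with \<open>1/x\<close> and telescoping gives
  \<open>\<Sum> \<psi>(j/2) = p(ln n - 1 - ln 2) + (m - 1/2)(ln n - ln m) + O(1/m)\<close> and
  \<open>\<Sum> \<psi>'(j/2) = 2(ln n - ln m) + O(1/m)\<close>, where \<open>ln n - ln m = r\<^sub>n\<^sup>2\<close>.
  Since \<open>s, t = O(1/r\<^sub>n)\<close> and \<open>r\<^sub>n\<close> is bounded below, all errors are \<open>O(1/(m r\<^sub>n))\<close>, and
  \<open>m r\<^sub>n \<rightarrow> \<infinity>\<close>: either \<open>m\<close> is large, or \<open>m\<close> is bounded and then \<open>r\<^sub>n\<^sup>2 = ln (n/m) \<rightarrow> \<infinity>\<close>.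
\<close>

section \<open>Elementary estimates for the logarithm\<close>

lemma ln_Suc_trapezoid_error:
  fixes x :: real assumes "x > 0"
  shows "\<bar>ln (x + 1) - ln x - (1/x + 1/(x + 1))/2\<bar> \<le> 1/(4*x^3)"
proof -
  have upper: "ln (x + 1) - ln x \<le> (1/x + 1/(x + 1))/2"
    using ln_inverse_approx_le[of x 1] assms by (simp add: inverse_eq_divide)
  have lower: "ln (x + 1) - ln x \<ge> 2/(2*x + 1)"
    using ln_inverse_approx_ge[of x "x + 1"] assms by simp
  have "x + 1 \<noteq> 0" "2*x + 1 \<noteq> 0" using assms by auto
  hence gap: "(1/x + 1/(x + 1))/2 - 2/(2*x + 1) = 1/(2*x*(x + 1)*(2*x + 1))"
    using assms by (simp add: divide_simps) (simp add: algebra_simps)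
  have "2*x*(x + 1)*(2*x + 1) \<ge> 4*x^3"
    using assms by (simp add: algebra_simps power3_eq_cube)
  hence "1/(2*x*(x + 1)*(2*x + 1)) \<le> 1/(4*x^3)"
    using assms by (intro divide_left_mono) auto
  thus ?thesis using upper lower gap by linarith
qed

lemma ln_Suc_minus_inverse_bounds:
  fixes k :: real assumes "k \<ge> 1"
  shows "0 \<le> ln (k + 1) - ln k - 1/(k + 1)" "ln (k + 1) - ln k - 1/(k + 1) \<le> 1/k - 1/(k + 1)"
proof -
  have "ln (k + 1) - ln k \<ge> 2/(2*k + 1)" using ln_inverse_approx_ge[of k "k + 1"] assms by simp
  moreover have "2/(2*k + 1) \<ge> 1/(k + 1)" using assms by (simp add: divide_simps)
  ultimately show "0 \<le> ln (k + 1) - ln k - 1/(k + 1)" by linarith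
  show "ln (k + 1) - ln k - 1/(k + 1) \<le> 1/k - 1/(k + 1)" using ln_diff_le_inverse[of k] assms by simp
qed

text \<open>The increment of Stirling's main term \<open>(k + 1/2) ln k - k\<close> is \<open>ln (k + 1)\<close> up to
  this summable error.\<close>
lemma ln_Suc_Stirling_error:
  fixes k :: real assumes k: "k \<ge> 1"
  shows "\<bar>(k + 1/2)*(ln (k + 1) - ln k) - 1\<bar> \<le> 1/k - 1/(k + 1)"
proof -
  define \<delta> where "\<delta> = ln (k + 1) - ln k - (1/k + 1/(k + 1))/2"
  have \<delta>: "\<bar>\<delta>\<bar> \<le> 1/(4*k^3)" using ln_Suc_trapezoid_error[of k] k by (simp add: \<delta>_def)
  have nz: "k \<noteq> 0" "k + 1 \<noteq> 0" using k by auto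
  have "(k + 1/2)*((1/k + 1/(k + 1))/2) - 1 = 1/(4*k*(k + 1))"
    using nz by (simp add: divide_simps) (simp add: algebra_simps)
  hence "(k + 1/2)*(ln (k + 1) - ln k) - 1 = (k + 1/2)*\<delta> + 1/(4*k*(k + 1))"
    by (simp add: \<delta>_def algebra_simps)
  hence "\<bar>(k + 1/2)*(ln (k + 1) - ln k) - 1\<bar> \<le> \<bar>(k + 1/2)*\<delta>\<bar> + \<bar>1/(4*k*(k + 1))\<bar>"
    by (metis abs_triangle_ineq)
  also have "\<dots> = (k + 1/2)*\<bar>\<delta>\<bar> + 1/(4*k*(k + 1))"
    using k by (simp add: abs_mult)
  also have "\<dots> \<le> (k + 1/2)*(1/(4*k^3)) + 1/(4*k*(k + 1))"
    using \<delta> k by (intro add_mono mult_left_mono) auto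
  also have "\<dots> = ((k + 1/2)*(k + 1) + k^2) / (4*k^3*(k + 1))"
    using nz by (simp add: divide_simps) (simp add: algebra_simps power3_eq_cube power2_eq_square)
  also have "\<dots> \<le> (4*k^2) / (4*k^3*(k + 1))"
  proof (rule divide_right_mono)
    have "4*k^2 - ((k + 1/2)*(k + 1) + k^2) = (k - 1)*(2*k + 1/2)"
      by (simp add: field_simps power2_eq_square)
    moreover have "(k - 1)*(2*k + 1/2) \<ge> 0" using k by simp
    ultimately show "(k + 1/2)*(k + 1) + k^2 \<le> 4*k^2" by linarith
  qed (use k in auto)
  also have "\<dots> = 1/k - 1/(k + 1)"
    using nz by (simp add: divide_simps) (simp add: algebra_simps power3_eq_cube power2_eq_square)
  finally show ?thesis .
qed

lemma inverse_cube_le_telescope: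
  fixes y :: real assumes "y > 1/2"
  shows "1/y^3 \<le> 1/(2*(y - 1/2)^2) - 1/(2*(y + 1 - 1/2)^2)"
proof -
  have "y*y > (1/2)*(1/2)" using assms by (intro mult_strict_mono) auto
  hence y2: "y^2 > 1/4" by (simp add: power2_eq_square)
  have "y - 1/2 \<noteq> 0" "y + 1/2 \<noteq> 0" using assms by auto
  hence "1/(2*(y - 1/2)^2) - 1/(2*(y + 1 - 1/2)^2) = y/((y - 1/2)^2*(y + 1/2)^2)"
    by (simp add: divide_simps) (simp add: algebra_simps power2_eq_square)
  also have "(y - 1/2)^2*(y + 1/2)^2 = (y^2 - 1/4)^2"
    by (simp add: algebra_simps power2_eq_square)
  moreover have "y/(y^2 - 1/4)^2 \<ge> y/(y^2)^2"
    using assms y2 by (intro divide_left_mono power_mono) auto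
  ultimately show ?thesis using assms by (simp add: power2_eq_square power3_eq_cube)
qed

lemma inverse_square_le_telescope:
  fixes y :: real assumes "y > 1/2"
  shows "1/y^2 \<le> 1/(y - 1/2) - 1/(y + 1 - 1/2)"
proof -
  have "y*y > (1/2)*(1/2)" using assms by (intro mult_strict_mono) auto
  hence y2: "y^2 > 1/4" by (simp add: power2_eq_square)
  have "y - 1/2 \<noteq> 0" "y + 1/2 \<noteq> 0" "y^2 - 1/4 \<noteq> 0" using assms y2 by auto
  hence "1/(y - 1/2) - 1/(y + 1 - 1/2) = 1/(y^2 - 1/4)"
    by (simp add: divide_simps) (simp add: algebra_simps power2_eq_square)
  moreover have "1/(y^2 - 1/4) \<ge> 1/y^2"
    using y2 by (intro divide_left_mono) (auto simp: power2_eq_square)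
  ultimately show ?thesis by simp
qed

section \<open>Bounds for the polygamma functions\<close>

lemma abs_Polygamma_2_le:
  fixes y :: real assumes y: "y > 1/2"
  shows "\<bar>Polygamma 2 y\<bar> \<le> 1/(y - 1/2)^2"
proof -
  let ?f = "\<lambda>k::nat. inverse ((y + of_nat k)^3)"
  let ?F = "\<lambda>k::nat. 1/(2*(y + real k - 1/2)^2)"
  have summable: "summable ?f" using Polygamma_converges'[of y 3] y by simp
  have "(\<Sum>k<M. ?f k) \<le> ?F 0" for M
  proof -
    have "(\<Sum>k<M. ?f k) \<le> (\<Sum>k<M. ?F k - ?F (Suc k))"
      using inverse_cube_le_telescope[of "y + real _"] y
      by (intro sum_mono) (auto simp: inverse_eq_divide algebra_simps)
    also have "\<dots> = ?F 0 - ?F M" by (rule sum_lessThan_telescope')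
    also have "\<dots> \<le> ?F 0" by simp
    finally show ?thesis .
  qed
  hence "suminf ?f \<le> ?F 0" by (intro suminf_le_const summable)
  moreover have "suminf ?f \<ge> 0" using y by (intro suminf_nonneg summable) auto
  moreover have "Polygamma 2 y = - 2 * suminf ?f" by (simp add: Polygamma_def)
  ultimately show ?thesis by simp
qed

lemma Polygamma_1_bounds:
  fixes y :: real assumes y: "y > 1/2"
  shows "1/y \<le> Polygamma 1 y" "Polygamma 1 y \<le> 1/(y - 1/2)"
proof -
  let ?f = "\<lambda>k::nat. inverse ((y + of_nat k)^2)"
  have summable: "summable ?f" using Polygamma_converges'[of y 2] y by simp
  have Polygamma_eq: "Polygamma 1 y = suminf ?f" by (simp add: Polygamma_def power2_eq_square)
  let ?G = "\<lambda>k::nat. 1/(y + real k)"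
  have "?G \<longlonglongrightarrow> 0" using y by real_asymp
  hence G_sums: "(\<lambda>k. ?G k - ?G (Suc k)) sums ?G 0" using telescope_sums' by fastforce
  have "suminf (\<lambda>k. ?G k - ?G (Suc k)) \<le> suminf ?f"
  proof (rule suminf_le)
    fix k :: nat
    have "y + real k > 0" using y by simp
    thus "?G k - ?G (Suc k) \<le> ?f k" by (simp add: divide_simps power2_eq_square)
  qed (use G_sums summable in \<open>auto simp: sums_iff\<close>)
  thus "1/y \<le> Polygamma 1 y" using Polygamma_eq G_sums by (simp add: sums_iff)
  let ?F = "\<lambda>k::nat. 1/(y + real k - 1/2)"
  have "(\<Sum>k<M. ?f k) \<le> ?F 0" for M
  proof -
    have "(\<Sum>k<M. ?f k) \<le> (\<Sum>k<M. ?F k - ?F (Suc k))"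
      using inverse_square_le_telescope[of "y + real _"] y
      by (intro sum_mono) (auto simp: inverse_eq_divide algebra_simps)
    also have "\<dots> = ?F 0 - ?F M" by (rule sum_lessThan_telescope')
    also have "\<dots> \<le> ?F 0" using y by simp
    finally show ?thesis .
  qed
  hence "suminf ?f \<le> ?F 0" by (intro suminf_le_const summable)
  thus "Polygamma 1 y \<le> 1/(y - 1/2)" using Polygamma_eq by simp
qed

lemma sum_ln_Suc_trapezoid_error_le:
  fixes x :: real assumes x: "x \<ge> 1"
  shows "\<bar>\<Sum>k<M. ln (x + real k + 1) - ln (x + real k) - (1/(x + real k) + 1/(x + real k + 1))/2\<bar>
         \<le> 1/(2*x^2)"
proof -
  let ?F = "\<lambda>k::nat. 1/(2*(x + real k - 1/2)^2)"
  have "\<bar>\<Sum>k<M. ln (x + real k + 1) - ln (x + real k) - (1/(x + real k) + 1/(x + real k + 1))/2\<bar>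
        \<le> (\<Sum>k<M. (1/4) * (?F k - ?F (Suc k)))"
  proof (rule order.trans[OF sum_abs sum_mono])
    fix k assume "k \<in> {..<M}"
    have "\<bar>ln (x + real k + 1) - ln (x + real k) - (1/(x + real k) + 1/(x + real k + 1))/2\<bar>
          \<le> (1/4) * (1/(x + real k)^3)"
      using ln_Suc_trapezoid_error[of "x + real k"] x by simp
    also have "\<dots> \<le> (1/4) * (?F k - ?F (Suc k))"
      using inverse_cube_le_telescope[of "x + real k"] x by (intro mult_left_mono) (auto simp: algebra_simps)
    finally show "\<bar>ln (x + real k + 1) - ln (x + real k) - (1/(x + real k) + 1/(x + real k + 1))/2\<bar>
          \<le> (1/4) * (?F k - ?F (Suc k))" .
  qed
  also have "\<dots> = (1/4) * (?F 0 - ?F M)"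
    unfolding sum_distrib_left[symmetric] by (subst sum_lessThan_telescope') simp
  also have "\<dots> \<le> (1/4) * ?F 0" by simp
  also have "?F 0 \<le> 2/x^2"
  proof -
    have "(x/2)^2 \<le> (x - 1/2)^2" using x by (intro power_mono) auto
    hence "1/(2*(x - 1/2)^2) \<le> 1/(2*(x/2)^2)" using x by (intro divide_left_mono mult_left_mono) auto
    thus ?thesis by (simp add: power2_eq_square)
  qed
  finally show ?thesis by simp
qed

text \<open>The partial sums of the trapezoidal errors differ from the terms of the limit formula
  \<open>Digamma_LIMSEQ\<close> only by a vanishing boundary term.\<close>
lemma Digamma_minus_ln_bound:
  fixes x :: real assumes x: "x \<ge> 1"
  shows "\<bar>Digamma x - ln x + 1/(2*x)\<bar> \<le> 1/(2*x^2)"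
proof -
  define b where "b = (\<lambda>M. \<Sum>k<M. ln (x + real k + 1) - ln (x + real k)
                                   - (1/(x + real k) + 1/(x + real k + 1))/2)"
  have b_eq: "b M = ln (x + real M) - ln x - (\<Sum>k<M. inverse (x + real k))
                    + 1/(2*x) - 1/(2*(x + real M))" for M
  proof (induction M)
    case (Suc M)
    have "x + real M \<noteq> 0" "x + real M + 1 \<noteq> 0" using x by auto
    hence "1/(2*(x + real M)) + (1/(x + real M) + 1/(x + real M + 1))/2
           = 1/(x + real M) + 1/(2*(x + real M + 1))"
      by (simp add: divide_simps) (simp add: algebra_simps)
    with Suc show ?case by (simp add: b_def inverse_eq_divide algebra_simps)
  qed (simp add: b_def)
  have b_split: "b = (\<lambda>M. (ln (real M) - (\<Sum>k<M. inverse (x + real k))) - ln x + 1/(2*x)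
                 + (ln (x + real M) - ln (real M) - 1/(2*(x + real M))))"
    by (rule ext) (simp add: b_eq)
  have "(\<lambda>M. ln (real M) - (\<Sum>k<M. inverse (x + real k))) \<longlonglongrightarrow> Digamma x"
    using Digamma_LIMSEQ[of x] x by simp
  moreover have "(\<lambda>M. ln (x + real M) - ln (real M) - 1/(2*(x + real M))) \<longlonglongrightarrow> 0"
    using x by real_asymp
  ultimately have "b \<longlonglongrightarrow> Digamma x - ln x + 1/(2*x) + 0"
    unfolding b_split by (intro tendsto_intros)
  hence "(\<lambda>M. \<bar>b M\<bar>) \<longlonglongrightarrow> \<bar>Digamma x - ln x + 1/(2*x)\<bar>" by (intro tendsto_rabs) simp
  moreover have "\<bar>b M\<bar> \<le> 1/(2*x^2)" for M
    unfolding b_def using sum_ln_Suc_trapezoid_error_le[OF x] .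
  ultimately show ?thesis by (intro LIMSEQ_le_const2[of "\<lambda>M. \<bar>b M\<bar>"]) auto
qed

section \<open>Sums over \<open>m < j \<le> n\<close>\<close>

lemma sum_atLeastAtMost_telescope:
  fixes f :: "nat \<Rightarrow> 'a::ab_group_add" assumes "m \<le> n"
  shows "(\<Sum>j\<in>{Suc m..n}. f j - f (j - 1)) = f n - f m"
  using assms
proof (induction n rule: dec_induct)
  case (step q)
  thus ?case by (simp add: sum.atLeast_Suc_atMost_Suc_shift)
qed simp

lemma abs_sum_le_telescoping_inverse:
  fixes e :: "nat \<Rightarrow> real" assumes m: "1 \<le> m" "m \<le> n" and c: "c \<ge> 0"
    and e: "\<And>j. m < j \<Longrightarrow> j \<le> n \<Longrightarrow> \<bar>e j\<bar> \<le> c * (1/(real j - 1) - 1/real j)"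
  shows "\<bar>\<Sum>j\<in>{Suc m..n}. e j\<bar> \<le> c / real m"
proof -
  have "\<bar>\<Sum>j\<in>{Suc m..k}. e j\<bar> \<le> c * (1/real m - 1/real k)" if "m \<le> k" "k \<le> n" for k
    using that
  proof (induction k rule: dec_induct)
    case (step q)
    have "\<bar>\<Sum>j\<in>{Suc m..Suc q}. e j\<bar> \<le> \<bar>\<Sum>j\<in>{Suc m..q}. e j\<bar> + \<bar>e (Suc q)\<bar>"
      using step by (simp add: sum.atLeast_Suc_atMost_Suc_shift)
    also have "\<dots> \<le> c * (1/real m - 1/real q) + c * (1/real q - 1/real (Suc q))"
      using step e[of "Suc q"] by (intro add_mono) auto
    finally show ?case by (simp add: algebra_simps)
  qed simp
  from this[of n] m have "\<bar>\<Sum>j\<in>{Suc m..n}. e j\<bar> \<le> c * (1/real m - 1/real n)" by simp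
  also have "\<dots> \<le> c / real m" using c by (simp add: right_diff_distrib)
  finally show ?thesis .
qed

lemma inverse_square_le_inverse_pred_diff:
  fixes x :: real assumes "x > 1"
  shows "1/x^2 \<le> 1/(x - 1) - 1/x"
proof -
  have "1/(x - 1) - 1/x = 1/((x - 1)*x)" using assms by (simp add: divide_simps)
  moreover have "1/x^2 \<le> 1/((x - 1)*x)"
    using assms by (intro divide_left_mono) (auto simp: power2_eq_square)
  ultimately show ?thesis by simp
qed

lemma sum_inverse_square_le:
  fixes m n :: nat assumes "1 \<le> m" "m \<le> n"
  shows "(\<Sum>j\<in>{Suc m..n}. 1/real j^2) \<le> 1/real m"
proof -
  have "\<bar>\<Sum>j\<in>{Suc m..n}. 1/real j^2\<bar> \<le> 1/real m"
    using assms inverse_square_le_inverse_pred_diff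
    by (intro abs_sum_le_telescoping_inverse) auto
  thus ?thesis by simp
qed

lemma sum_inverse_minus_ln_bound:
  fixes m n :: nat assumes m: "1 \<le> m" "m \<le> n"
  shows "\<bar>(\<Sum>j\<in>{Suc m..n}. 1/real j) - (ln n - ln m)\<bar> \<le> 1/real m"
proof -
  have "(\<Sum>j\<in>{Suc m..n}. ln (real j) - ln (real (j - 1))) = ln n - ln m"
    using sum_atLeastAtMost_telescope[OF m(2), of "\<lambda>j. ln (real j)"] by simp
  moreover have "\<bar>\<Sum>j\<in>{Suc m..n}. ln (real j) - ln (real (j - 1)) - 1/real j\<bar> \<le> 1 / real m"
  proof (rule abs_sum_le_telescoping_inverse[OF m])
    fix j assume "m < j" "j \<le> n"
    hence j: "real j - 1 \<ge> 1" "real (j - 1) = real j - 1" using m by (auto simp: of_nat_diff)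
    show "\<bar>ln (real j) - ln (real (j - 1)) - 1/real j\<bar> \<le> 1 * (1/(real j - 1) - 1/real j)"
      using ln_Suc_minus_inverse_bounds[OF j(1)] unfolding j(2) by simp
  qed simp
  ultimately show ?thesis by (simp add: sum_subtractf abs_minus_commute)
qed

lemma sum_ln_Stirling_bound:
  fixes m n :: nat assumes m: "1 \<le> m" "m \<le> n"
  shows "\<bar>(\<Sum>j\<in>{Suc m..n}. ln (real j))
          - ((real n + 1/2) * ln n - real n - ((real m + 1/2) * ln m - real m))\<bar> \<le> 1/real m"
proof -
  define h where "h = (\<lambda>j::nat. (real j + 1/2) * ln (real j) - real j)"
  have "(\<Sum>j\<in>{Suc m..n}. h j - h (j - 1)) = h n - h m"
    by (rule sum_atLeastAtMost_telescope[OF m(2)])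
  moreover have "\<bar>\<Sum>j\<in>{Suc m..n}. ln (real j) - (h j - h (j - 1))\<bar> \<le> 1 / real m"
  proof (rule abs_sum_le_telescoping_inverse[OF m])
    fix j assume "m < j" "j \<le> n"
    define k where "k = real j - 1"
    have k: "k \<ge> 1" "real j = k + 1" "real (j - 1) = k"
      using \<open>m < j\<close> m by (auto simp: k_def of_nat_diff)
    have "ln (real j) - (h j - h (j - 1)) = - ((k + 1/2)*(ln (k + 1) - ln k) - 1)"
      unfolding h_def k(2,3) by (simp add: algebra_simps)
    thus "\<bar>ln (real j) - (h j - h (j - 1))\<bar> \<le> 1 * (1/(real j - 1) - 1/real j)"
      using ln_Suc_Stirling_error[OF k(1)] unfolding k(2) by simp
  qed simp
  ultimately show ?thesis by (simp add: h_def sum_subtractf)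
qed

lemma sum_Polygamma_1_half_bound:
  fixes m n :: nat assumes m: "1 \<le> m" "m \<le> n"
  shows "\<bar>(\<Sum>j\<in>{Suc m..n}. Polygamma 1 (real j/2)) - 2*(ln n - ln m)\<bar> \<le> 4 / real m"
proof -
  have "\<bar>\<Sum>j\<in>{Suc m..n}. Polygamma 1 (real j/2) - 2 * (1/real j)\<bar> \<le> 2 / real m"
  proof (rule abs_sum_le_telescoping_inverse[OF m])
    fix j assume "m < j" "j \<le> n"
    hence j: "real j \<ge> 2" using m by linarith
    have "Polygamma 1 (real j/2) \<le> 2/(real j - 1)"
      using Polygamma_1_bounds(2)[of "real j/2"] j by (simp add: field_simps)
    moreover have "2/real j \<le> Polygamma 1 (real j/2)" using Polygamma_1_bounds(1)[of "real j/2"] j by simp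
    ultimately show "\<bar>Polygamma 1 (real j/2) - 2 * (1/real j)\<bar> \<le> 2 * (1/(real j - 1) - 1/real j)"
      by (simp add: abs_le_iff algebra_simps)
  qed simp
  moreover have "4 / real m = 2 / real m + 2 * (1 / real m)" by simp
  ultimately show ?thesis using sum_inverse_minus_ln_bound[OF m]
    unfolding sum_subtractf sum_distrib_left[symmetric] by (smt (verit))
qed

lemma sum_Digamma_half_bound:
  fixes m n :: nat assumes m: "1 \<le> m" "m \<le> n"
  shows "\<bar>(\<Sum>j\<in>{Suc m..n}. Digamma (real j/2))
          - (real (n - m)*(ln n - 1 - ln 2) + (real m - 1/2)*(ln n - ln m))\<bar> \<le> 4 / real m"
proof -
  have "\<bar>\<Sum>j\<in>{Suc m..n}. Digamma (real j/2) - ln (real j) + ln 2 + 1/real j\<bar> \<le> 2 / real m"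
  proof (rule abs_sum_le_telescoping_inverse[OF m])
    fix j assume "m < j" "j \<le> n"
    hence j: "real j \<ge> 2" using m by linarith
    have "\<bar>Digamma (real j/2) - ln (real j) + ln 2 + 1/real j\<bar> \<le> 1/(2*(real j/2)^2)"
      using Digamma_minus_ln_bound[of "real j/2"] j by (simp add: ln_div)
    also have "\<dots> = 2 * (1/real j^2)" by (simp add: power2_eq_square)
    also have "\<dots> \<le> 2 * (1/(real j - 1) - 1/real j)"
      using inverse_square_le_inverse_pred_diff[of "real j"] j by simp
    finally show "\<bar>Digamma (real j/2) - ln (real j) + ln 2 + 1/real j\<bar> \<le> 2 * (1/(real j - 1) - 1/real j)" .
  qed simp
  moreover have "real (n - m) * ln n = (real n + 1/2) * ln n - (real m + 1/2) * ln n"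
    using m by (simp add: of_nat_diff algebra_simps)
  ultimately show ?thesis
    using sum_inverse_minus_ln_bound[OF m] sum_ln_Stirling_bound[OF m] m
    unfolding sum.distrib sum_subtractf abs_le_iff by (simp add: of_nat_diff algebra_simps)
qed

section \<open>Second-order expansion of \<open>ln \<Gamma>\<close>\<close>

lemma ln_Gamma_Taylor2_bound:
  fixes a u e :: real assumes e: "e > 0" and ae: "\<And>\<xi>. \<bar>\<xi>\<bar> \<le> \<bar>u\<bar> \<Longrightarrow> a + \<xi> - 1/2 \<ge> e"
  shows "\<bar>ln_Gamma (a + u) - ln_Gamma a - u * Digamma a - u^2/2 * Polygamma 1 a\<bar> \<le> \<bar>u\<bar>^3 / (6*e^2)"
proof -
  define diff where "diff = (\<lambda>k::nat. \<lambda>v::real. if k = 0 then ln_Gamma (a + v) else Polygamma (k - 1) (a + v))"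
  have "\<exists>\<xi>. \<bar>\<xi>\<bar> \<le> \<bar>u\<bar> \<and> ln_Gamma (a + u) = (\<Sum>k<3. diff k 0 / fact k * u ^ k) + diff 3 \<xi> / fact 3 * u ^ 3"
  proof (rule Maclaurin_bi_le[where diff = diff and f = "\<lambda>v. ln_Gamma (a + v)"])
    show "diff 0 = (\<lambda>v. ln_Gamma (a + v))" by (simp add: diff_def)
    show "\<forall>k t. k < 3 \<and> \<bar>t\<bar> \<le> \<bar>u\<bar> \<longrightarrow> (diff k has_real_derivative diff (Suc k) t) (at t)"
    proof (intro allI impI, elim conjE)
      fix k t assume "\<bar>t\<bar> \<le> \<bar>u\<bar>"
      hence "a + t > 0" using ae e by fastforce
      hence not_pole: "a + t \<notin> \<int>\<^sub>\<le>\<^sub>0" by (auto elim!: nonpos_Ints_cases)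
      show "(diff k has_real_derivative diff (Suc k) t) (at t)"
      proof (cases k)
        case 0
        have "((\<lambda>v. ln_Gamma (a + v)) has_real_derivative Digamma (a + t) * 1) (at t)"
          by (rule DERIV_chain2[where f = ln_Gamma])
             (auto intro!: derivative_eq_intros has_field_derivative_ln_Gamma_real \<open>a + t > 0\<close>)
        thus ?thesis using 0 by (simp add: diff_def)
      next
        case (Suc i)
        have "((\<lambda>v. Polygamma i (a + v)) has_real_derivative Polygamma (Suc i) (a + t) * 1) (at t)"
          by (rule DERIV_chain2[where f = "Polygamma i"])
             (auto intro!: derivative_eq_intros has_field_derivative_Polygamma not_pole)
        thus ?thesis using Suc by (simp add: diff_def)
      qed
    qed
  qed
  then obtain \<xi> where \<xi>: "\<bar>\<xi>\<bar> \<le> \<bar>u\<bar>"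
    and Taylor: "ln_Gamma (a + u) = (\<Sum>k<3. diff k 0 / fact k * u ^ k) + diff 3 \<xi> / fact 3 * u ^ 3"
    by blast
  have "ln_Gamma (a + u) - ln_Gamma a - u * Digamma a - u^2/2 * Polygamma 1 a = Polygamma 2 (a + \<xi>) / 6 * u^3"
    using Taylor by (simp add: diff_def eval_nat_numeral algebra_simps)
  also have "\<bar>\<dots>\<bar> = \<bar>Polygamma 2 (a + \<xi>)\<bar> * \<bar>u\<bar>^3 / 6" by (simp add: abs_mult power_abs)
  also have "\<dots> \<le> (1/e^2) * \<bar>u\<bar>^3 / 6"
  proof -
    have "\<bar>Polygamma 2 (a + \<xi>)\<bar> \<le> 1/(a + \<xi> - 1/2)^2" using abs_Polygamma_2_le[of "a + \<xi>"] ae[OF \<xi>] e by simp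
    also have "\<dots> \<le> 1/e^2" using ae[OF \<xi>] e by (intro divide_left_mono power_mono) auto
    finally show ?thesis by (intro divide_right_mono mult_right_mono) auto
  qed
  finally show ?thesis by simp
qed

lemma sum_ln_Gamma_Taylor2_bound:
  fixes m n :: nat and u :: real assumes m: "1 \<le> m" "m \<le> n" and u: "\<bar>u\<bar> \<le> real m/4"
  shows "\<bar>\<Sum>j\<in>{Suc m..n}. ln_Gamma (real j/2 + u) - ln_Gamma (real j/2)
            - u * Digamma (real j/2) - u^2/2 * Polygamma 1 (real j/2)\<bar> \<le> 11 * \<bar>u\<bar>^3 / real m"
proof -
  have "\<bar>\<Sum>j\<in>{Suc m..n}. ln_Gamma (real j/2 + u) - ln_Gamma (real j/2)
            - u * Digamma (real j/2) - u^2/2 * Polygamma 1 (real j/2)\<bar>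
        \<le> (\<Sum>j\<in>{Suc m..n}. (32/3 * \<bar>u\<bar>^3) * (1/real j^2))"
  proof (rule order.trans[OF sum_abs sum_mono])
    fix j assume "j \<in> {Suc m..n}"
    hence j: "real j \<ge> 2" "real m \<le> real j - 1" using m by auto
    have "\<bar>ln_Gamma (real j/2 + u) - ln_Gamma (real j/2) - u * Digamma (real j/2) - u^2/2 * Polygamma 1 (real j/2)\<bar>
          \<le> \<bar>u\<bar>^3 / (6*(real j/8)^2)"
      by (rule ln_Gamma_Taylor2_bound) (use u j in auto)
    also have "\<dots> = (32/3 * \<bar>u\<bar>^3) * (1/real j^2)" by (simp add: power2_eq_square)
    finally show "\<bar>ln_Gamma (real j/2 + u) - ln_Gamma (real j/2) - u * Digamma (real j/2) - u^2/2 * Polygamma 1 (real j/2)\<bar>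
          \<le> (32/3 * \<bar>u\<bar>^3) * (1/real j^2)" .
  qed
  also have "\<dots> = (32/3 * \<bar>u\<bar>^3) * (\<Sum>j\<in>{Suc m..n}. 1/real j^2)" by (simp add: sum_distrib_left)
  also have "\<dots> \<le> (32/3 * \<bar>u\<bar>^3) * (1/real m)" by (intro mult_left_mono sum_inverse_square_le m) auto
  also have "\<dots> \<le> 11 * \<bar>u\<bar>^3 / real m" using m by (simp add: divide_simps)
  finally show ?thesis .
qed

lemma sum_ln_Gamma_shift_diff_bound:
  fixes n m :: nat and t s :: real
  assumes m: "1 \<le> m" "m \<le> n" and t: "\<bar>t\<bar> \<le> real m/4" and s: "\<bar>s\<bar> \<le> real m/4"
  shows "\<bar>(\<Sum>j\<in>{Suc m..n}. ln_Gamma (real j/2 + t) - ln_Gamma (real j/2 + s))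
          - (real (n - m)*(t - s)*(ln n - 1 - ln 2)
             + (ln n - ln m)*((t^2 - s^2) - (real (n - m) - real n + 1/2)*(t - s)))\<bar>
         \<le> (4*\<bar>t - s\<bar> + 2*\<bar>t^2 - s^2\<bar> + 11*(\<bar>t\<bar>^3 + \<bar>s\<bar>^3)) / real m"
proof -
  define \<tau> where "\<tau> = (\<lambda>u j. ln_Gamma (real j/2 + u) - ln_Gamma (real j/2)
                          - u * Digamma (real j/2) - u^2/2 * Polygamma 1 (real j/2))"
  define T where "T = (\<lambda>u. \<Sum>j\<in>{Suc m..n}. \<tau> u j)"
  define \<Psi> where "\<Psi> = (\<Sum>j\<in>{Suc m..n}. Digamma (real j/2))"
  define \<Psi>' where "\<Psi>' = (\<Sum>j\<in>{Suc m..n}. Polygamma 1 (real j/2))"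
  define A where "A = real (n - m)*(ln n - 1 - ln 2) + (real m - 1/2)*(ln n - ln m)"
  define R where "R = ln (real n) - ln (real m)"
  have "(\<Sum>j\<in>{Suc m..n}. ln_Gamma (real j/2 + t) - ln_Gamma (real j/2 + s))
        = (\<Sum>j\<in>{Suc m..n}. (t - s) * Digamma (real j/2) + (t^2 - s^2)/2 * Polygamma 1 (real j/2)
                              + \<tau> t j - \<tau> s j)"
    by (intro sum.cong refl) (simp add: \<tau>_def field_simps)
  also have "\<dots> = (t - s) * \<Psi> + (t^2 - s^2)/2 * \<Psi>' + T t - T s"
    by (simp add: T_def \<Psi>_def \<Psi>'_def sum.distrib sum_subtractf sum_distrib_left)
  finally have sum_eq: "(\<Sum>j\<in>{Suc m..n}. ln_Gamma (real j/2 + t) - ln_Gamma (real j/2 + s))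
                        = (t - s) * \<Psi> + (t^2 - s^2)/2 * \<Psi>' + T t - T s" .
  have main_eq: "real (n - m)*(t - s)*(ln n - 1 - ln 2)
                 + (ln n - ln m)*((t^2 - s^2) - (real (n - m) - real n + 1/2)*(t - s))
                 = (t - s) * A + (t^2 - s^2)/2 * (2*R)"
    using m by (simp add: A_def R_def of_nat_diff field_simps)
  have split: "(\<Sum>j\<in>{Suc m..n}. ln_Gamma (real j/2 + t) - ln_Gamma (real j/2 + s))
      - (real (n - m)*(t - s)*(ln n - 1 - ln 2)
         + (ln n - ln m)*((t^2 - s^2) - (real (n - m) - real n + 1/2)*(t - s)))
      = (t - s) * (\<Psi> - A) + (t^2 - s^2)/2 * (\<Psi>' - 2*R) + T t - T s"
    unfolding sum_eq main_eq by (simp add: right_diff_distrib)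
  have "\<bar>(t - s) * (\<Psi> - A) + (t^2 - s^2)/2 * (\<Psi>' - 2*R) + T t - T s\<bar>
        \<le> \<bar>(t - s) * (\<Psi> - A)\<bar> + \<bar>(t^2 - s^2)/2 * (\<Psi>' - 2*R)\<bar> + \<bar>T t\<bar> + \<bar>T s\<bar>"
    by linarith
  also have "\<dots> \<le> \<bar>t - s\<bar> * (4 / real m) + \<bar>t^2 - s^2\<bar>/2 * (4 / real m)
                   + 11 * \<bar>t\<bar>^3 / real m + 11 * \<bar>s\<bar>^3 / real m"
  proof (intro add_mono)
    show "\<bar>(t - s) * (\<Psi> - A)\<bar> \<le> \<bar>t - s\<bar> * (4 / real m)"
      unfolding abs_mult \<Psi>_def A_def by (intro mult_left_mono sum_Digamma_half_bound m) auto
    show "\<bar>(t^2 - s^2)/2 * (\<Psi>' - 2*R)\<bar> \<le> \<bar>t^2 - s^2\<bar>/2 * (4 / real m)"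
      unfolding abs_mult abs_divide abs_numeral \<Psi>'_def R_def
      by (intro mult_left_mono sum_Polygamma_1_half_bound m) auto
    show "\<bar>T t\<bar> \<le> 11 * \<bar>t\<bar>^3 / real m" "\<bar>T s\<bar> \<le> 11 * \<bar>s\<bar>^3 / real m"
      unfolding T_def \<tau>_def by (intro sum_ln_Gamma_Taylor2_bound m t s)+
  qed
  also have "\<dots> = (4*\<bar>t - s\<bar> + 2*\<bar>t^2 - s^2\<bar> + 11*(\<bar>t\<bar>^3 + \<bar>s\<bar>^3)) / real m"
    by (simp add: add_divide_distrib)
  finally show ?thesis unfolding split .
qed

section \<open>The multivariate Gamma function\<close>

lemma mvGamma_eq_exp_sum_ln_Gamma:
  fixes n p :: nat and u :: real
  assumes "p \<le> n" "(real (n - p) + 1)/2 + u > 0"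
  shows "mvGamma p (real n/2 + u) =
           pi powr (real p * (real p - 1) / 4) * exp (\<Sum>j\<in>{Suc (n - p)..n}. ln_Gamma (real j/2 + u))"
proof -
  have "(\<Prod>i\<in>{1..p}. Gamma (real n/2 + u - (real i - 1) / 2)) = (\<Prod>j\<in>{Suc (n - p)..n}. Gamma (real j/2 + u))"
  proof (rule prod.reindex_bij_witness[of _ "\<lambda>j. n + 1 - j" "\<lambda>i. n + 1 - i"])
    fix i assume "i \<in> {1..p}"
    with assms show "n + 1 - (n + 1 - i) = i" "n + 1 - i \<in> {Suc (n - p)..n}" by auto
    from \<open>i \<in> {1..p}\<close> assms have "real (n + 1 - i)/2 + u = real n/2 + u - (real i - 1) / 2"
      by (simp add: of_nat_diff field_simps)
    thus "Gamma (real (n + 1 - i)/2 + u) = Gamma (real n/2 + u - (real i - 1) / 2)"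
      by (rule arg_cong[where f = Gamma])
  next
    fix j assume "j \<in> {Suc (n - p)..n}"
    with assms show "n + 1 - (n + 1 - j) = j" "n + 1 - j \<in> {1..p}" by auto
  qed
  also have "\<dots> = (\<Prod>j\<in>{Suc (n - p)..n}. exp (ln_Gamma (real j/2 + u)))"
  proof (rule prod.cong[OF refl])
    fix j assume "j \<in> {Suc (n - p)..n}"
    hence "(real (n - p) + 1)/2 \<le> real j/2" by simp
    hence "real j/2 + u > 0" using assms(2) by linarith
    thus "Gamma (real j/2 + u) = exp (ln_Gamma (real j/2 + u))" by (rule Gamma_real_pos_exp)
  qed
  also have "\<dots> = exp (\<Sum>j\<in>{Suc (n - p)..n}. ln_Gamma (real j/2 + u))" by (simp add: exp_sum)
  finally show ?thesis by (simp add: mvGamma_def)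
qed

lemma ln_mvGamma_ratio:
  fixes n p :: nat and t s :: real
  assumes "p \<le> n" "(real (n - p) + 1)/2 + t > 0" "(real (n - p) + 1)/2 + s > 0"
  shows "ln (mvGamma p (real n/2 + t) / mvGamma p (real n/2 + s)) =
           (\<Sum>j\<in>{Suc (n - p)..n}. ln_Gamma (real j/2 + t) - ln_Gamma (real j/2 + s))"
  using mvGamma_eq_exp_sum_ln_Gamma[OF assms(1,2)] mvGamma_eq_exp_sum_ln_Gamma[OF assms(1,3)]
  by (simp add: exp_diff[symmetric] sum_subtractf)

text \<open>The remainder in the theorem, with \<open>r\<^sub>n\<^sup>2\<close> written as \<open>ln n - ln (n - p)\<close>.\<close>
definition mvGamma_ratio_remainder :: "nat \<Rightarrow> nat \<Rightarrow> real \<Rightarrow> real \<Rightarrow> real" where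
  "mvGamma_ratio_remainder p n t s =
     ln (mvGamma p (real n / 2 + t) / mvGamma p (real n / 2 + s))
     - (real p * (t - s) * (ln (real n) - 1 - ln 2)
        + (ln (real n) - ln (real (n - p))) * ((t^2 - s^2) - (real p - real n + 1/2) * (t - s)))"

lemma abs_mvGamma_ratio_remainder_le:
  fixes n p :: nat and s t :: real
  assumes n: "p < n" and t: "\<bar>t\<bar> \<le> real (n - p) / 4" and s: "\<bar>s\<bar> \<le> real (n - p) / 4"
  shows "\<bar>mvGamma_ratio_remainder p n t s\<bar>
           \<le> (4*\<bar>t - s\<bar> + 2*\<bar>t^2 - s^2\<bar> + 11*(\<bar>t\<bar>^3 + \<bar>s\<bar>^3)) / real (n - p)"
proof -
  have m: "1 \<le> n - p" "n - p \<le> n" "real p = real (n - (n - p))" using n by auto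
  have "(real (n - p) + 1)/2 + t > 0" "(real (n - p) + 1)/2 + s > 0"
    using t s by (simp_all add: add_divide_distrib abs_le_iff)
  hence "ln (mvGamma p (real n / 2 + t) / mvGamma p (real n / 2 + s))
          = (\<Sum>j\<in>{Suc (n - p)..n}. ln_Gamma (real j/2 + t) - ln_Gamma (real j/2 + s))"
    using n by (intro ln_mvGamma_ratio) auto
  thus ?thesis
    using sum_ln_Gamma_shift_diff_bound[OF m(1,2) t s]
    unfolding mvGamma_ratio_remainder_def m(3) by simp
qed

section \<open>Asymptotics\<close>

lemma error_terms_le_of_abs_le:
  fixes t s a b C :: real
  assumes t: "\<bar>t\<bar> \<le> C*a" and s: "\<bar>s\<bar> \<le> C*a" and a: "0 \<le> a" "a \<le> b" and C: "0 \<le> C"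
  shows "4*\<bar>t - s\<bar> + 2*\<bar>t^2 - s^2\<bar> + 11*(\<bar>t\<bar>^3 + \<bar>s\<bar>^3) \<le> (8*C + 4*C^2*b + 22*C^3*b^2) * a"
proof -
  have square: "\<bar>u\<bar>^2 \<le> C^2*b*a" if u: "\<bar>u\<bar> \<le> C*a" for u :: real
  proof -
    have "\<bar>u\<bar>^2 \<le> (C*a)^2" using u by (intro power_mono) auto
    also have "\<dots> = C^2*a*a" by (simp add: power2_eq_square)
    also have "\<dots> \<le> C^2*b*a" using a C by (intro mult_right_mono mult_left_mono) auto
    finally show ?thesis .
  qed
  have cube: "\<bar>u\<bar>^3 \<le> C^3*b^2*a" if u: "\<bar>u\<bar> \<le> C*a" for u :: real
  proof -
    have "\<bar>u\<bar>^3 \<le> (C*a)^3" using u by (intro power_mono) auto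
    also have "\<dots> = C^3*(a*a)*a" by (simp add: power3_eq_cube)
    also have "\<dots> \<le> C^3*(b*b)*a" using a C by (intro mult_right_mono mult_left_mono mult_mono) auto
    finally show ?thesis by (simp add: power2_eq_square)
  qed
  have "\<bar>t^2 - s^2\<bar> \<le> \<bar>t\<bar>^2 + \<bar>s\<bar>^2" by (simp add: abs_le_iff)
  moreover have "\<bar>t - s\<bar> \<le> 2*C*a" using t s by linarith
  moreover have "(8*C + 4*C^2*b + 22*C^3*b^2) * a = 4*(2*C*a) + 2*(2*(C^2*b*a)) + 11*(2*(C^3*b^2*a))"
    by (simp add: algebra_simps)
  ultimately show ?thesis using square[OF t] square[OF s] cube[OF t] cube[OF s] by (smt (verit))
qed

lemma abs_mvGamma_ratio_remainder_le_inverse: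
  fixes n p :: nat and s t r r0 C :: real
  assumes n: "p < n" and r: "0 < r0" "r0 \<le> r" and C: "0 \<le> C"
    and t: "\<bar>t\<bar> \<le> C * (1/r)" and s: "\<bar>s\<bar> \<le> C * (1/r)"
    and large: "4 * C \<le> real (n - p) * r"
  shows "\<bar>mvGamma_ratio_remainder p n t s\<bar>
           \<le> (8*C + 4*C^2*(1/r0) + 22*C^3*(1/r0)^2) * (1 / (real (n - p) * r))"
proof -
  have "C * (1/r) \<le> real (n - p) / 4" using large r by (simp add: field_simps)
  hence "\<bar>mvGamma_ratio_remainder p n t s\<bar>
           \<le> (4*\<bar>t - s\<bar> + 2*\<bar>t^2 - s^2\<bar> + 11*(\<bar>t\<bar>^3 + \<bar>s\<bar>^3)) / real (n - p)"
    using t s by (intro abs_mvGamma_ratio_remainder_le n) linarith+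
  also have "\<dots> \<le> ((8*C + 4*C^2*(1/r0) + 22*C^3*(1/r0)^2) * (1/r)) / real (n - p)"
    using n r t s C by (intro divide_right_mono error_terms_le_of_abs_le) (auto simp: field_simps)
  finally show ?thesis by (simp add: mult.commute)
qed

text \<open>If \<open>m\<close> stays bounded then \<open>r\<close> itself tends to infinity, since \<open>r\<^sup>2 \<ge> ln n - ln m\<close>;
  otherwise \<open>m\<close> is large while \<open>r\<close> stays bounded below.\<close>
lemma filterlim_mult_at_top_if_ln_gap:
  fixes m :: "nat \<Rightarrow> nat" and r :: "nat \<Rightarrow> real" and r0 :: real
  assumes r0: "r0 > 0"
    and ev: "eventually (\<lambda>n. 1 \<le> m n \<and> r0 \<le> r n \<and> ln (real n) - ln (real (m n)) \<le> (r n)^2) sequentially"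
  shows "filterlim (\<lambda>n. real (m n) * r n) at_top sequentially"
  unfolding filterlim_at_top_gt[where c = 0]
proof (intro allI impI)
  fix B :: real assume B: "B > 0"
  obtain M :: nat where M: "B / r0 \<le> real M" "1 \<le> M"
    using real_arch_simple[of "max 1 (B / r0)"] by (metis max.boundedE of_nat_1 of_nat_le_iff)
  have "filterlim (\<lambda>n. ln (real n)) at_top sequentially" by real_asymp
  hence "eventually (\<lambda>n. ln (real M) + B^2 \<le> ln (real n)) sequentially"
    by (simp add: filterlim_at_top)
  with ev show "eventually (\<lambda>n. B \<le> real (m n) * r n) sequentially"
  proof eventually_elim
    case (elim n)
    hence r_pos: "r n > 0" and m1: "real (m n) \<ge> 1" using r0 by auto
    show ?case
    proof (cases "M \<le> m n")
      case True
      have "B \<le> real M * r0" using M r0 by (simp add: field_simps)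
      also have "\<dots> \<le> real (m n) * r n" using True elim r0 by (intro mult_mono) auto
      finally show ?thesis .
    next
      case False
      hence "ln (real (m n)) \<le> ln (real M)" using m1 by simp
      hence "B^2 \<le> (r n)^2" using elim by linarith
      hence "B \<le> r n" using power2_le_iff_abs_le[of "r n" B] r_pos by simp
      also have "\<dots> \<le> real (m n) * r n" using m1 r_pos by simp
      finally show ?thesis .
    qed
  qed
qed

lemma mvGamma_ratio_remainder_tendsto_0:
  fixes p :: "nat \<Rightarrow> nat" and r s t :: "nat \<Rightarrow> real" and r0 :: real
  assumes n: "eventually (\<lambda>n. p n < n) sequentially"
    and r: "0 < r0" "eventually (\<lambda>n. r0 \<le> r n) sequentially"
    and large: "filterlim (\<lambda>n. real (n - p n) * r n) at_top sequentially"
    and s: "s \<in> O(\<lambda>n. 1 / r n)" and t: "t \<in> O(\<lambda>n. 1 / r n)"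
  shows "(\<lambda>n. mvGamma_ratio_remainder (p n) n (t n) (s n)) \<longlonglongrightarrow> 0"
proof -
  obtain cs where cs: "cs > 0" "eventually (\<lambda>n. norm (s n) \<le> cs * norm (1 / r n)) sequentially"
    using s by (elim landau_o.bigE)
  obtain ct where ct: "ct > 0" "eventually (\<lambda>n. norm (t n) \<le> ct * norm (1 / r n)) sequentially"
    using t by (elim landau_o.bigE)
  define C where "C = max cs ct"
  define K where "K = 8*C + 4*C^2*(1/r0) + 22*C^3*(1/r0)^2"
  have "eventually (\<lambda>n. norm (mvGamma_ratio_remainder (p n) n (t n) (s n))
                          \<le> K * (1 / (real (n - p n) * r n))) sequentially"
    using n r(2) cs(2) ct(2) large[unfolded filterlim_at_top, rule_format, of "4*C"]
  proof eventually_elim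
    case (elim n)
    have "cs * (1 / r n) \<le> C * (1 / r n)" "ct * (1 / r n) \<le> C * (1 / r n)"
      using elim r by (intro mult_right_mono; simp add: C_def)+
    thus ?case unfolding real_norm_def K_def
      using elim r cs ct by (intro abs_mvGamma_ratio_remainder_le_inverse) (auto simp: C_def)
  qed
  moreover have "(\<lambda>n. K * (1 / (real (n - p n) * r n))) \<longlonglongrightarrow> 0"
    by (intro tendsto_mult_right_zero tendsto_divide_0[OF tendsto_const]
              filterlim_at_top_imp_at_infinity large)
  ultimately show ?thesis by (rule Lim_null_comparison)
qed

lemma rseq_squared:
  assumes "p n < n"
  shows "(rseq p n)^2 = ln (real n) - ln (real (n - p n))"
proof -
  have "1 - real (p n) / real n = real (n - p n) / real n"
    using assms by (simp add: of_nat_diff field_simps)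
  moreover have "ln (real (n - p n) / real n) \<le> 0" using assms by simp
  ultimately show ?thesis using assms by (simp add: rseq_def ln_div)
qed

lemma sqrt_ratio_le_rseq:
  assumes "p n < n"
  shows "sqrt (real (p n) / real n) \<le> rseq p n"
proof -
  have "ln (1 - real (p n) / real n) \<le> (1 - real (p n) / real n) - 1"
    using assms by (intro ln_le_minus_one) simp
  thus ?thesis unfolding rseq_def by (intro real_sqrt_le_mono) simp
qed

theorem lemma4:
  fixes p :: "nat \<Rightarrow> nat" and s t :: "nat \<Rightarrow> real" and y :: real
  assumes "eventually (\<lambda>n. p n < n) sequentially"
    and "y \<in> {0<..1}"
    and "(\<lambda>n. real (p n) / real n) \<longlonglongrightarrow> y"
    and "s \<in> O(\<lambda>n. 1 / rseq p n)"
    and "t \<in> O(\<lambda>n. 1 / rseq p n)"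
  shows "(\<lambda>n. ln (mvGamma (p n) (real n / 2 + t n) / mvGamma (p n) (real n / 2 + s n))
            - ( real (p n) * (t n - s n) * (ln (real n) - 1 - ln 2)
              + (rseq p n)\<^sup>2 * ((t n ^ 2 - s n ^ 2)
                   - (real (p n) - real n + 1 / 2) * (t n - s n))))
         \<longlonglongrightarrow> 0"
proof -
  define r0 where "r0 = sqrt (y/2)"
  have r0: "r0 > 0" and "y/2 < y" using assms(2) by (simp_all add: r0_def)
  have r_lower: "eventually (\<lambda>n. r0 \<le> rseq p n) sequentially"
    using assms(1) order_tendstoD(1)[OF assms(3) \<open>y/2 < y\<close>]
    by eventually_elim (auto simp: r0_def intro: order.trans[OF _ sqrt_ratio_le_rseq])
  have "eventually (\<lambda>n. 1 \<le> n - p n \<and> r0 \<le> rseq p n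
                          \<and> ln (real n) - ln (real (n - p n)) \<le> (rseq p n)^2) sequentially"
    using assms(1) r_lower by eventually_elim (auto simp: rseq_squared)
  hence "filterlim (\<lambda>n. real (n - p n) * rseq p n) at_top sequentially"
    by (rule filterlim_mult_at_top_if_ln_gap[OF r0])
  hence "(\<lambda>n. mvGamma_ratio_remainder (p n) n (t n) (s n)) \<longlonglongrightarrow> 0"
    using assms(1,4,5) r0 r_lower by (intro mvGamma_ratio_remainder_tendsto_0)
  moreover have "eventually (\<lambda>n. mvGamma_ratio_remainder (p n) n (t n) (s n) =
      ln (mvGamma (p n) (real n / 2 + t n) / mvGamma (p n) (real n / 2 + s n))
      - ( real (p n) * (t n - s n) * (ln (real n) - 1 - ln 2)
        + (rseq p n)\<^sup>2 * ((t n ^ 2 - s n ^ 2) - (real (p n) - real n + 1 / 2) * (t n - s n)))) sequentially"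
    using assms(1) by eventually_elim (simp add: mvGamma_ratio_remainder_def rseq_squared)
  ultimately show ?thesis by (rule Lim_transform_eventually)
qed

end
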